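(* Let $\mathbf{A}\in\mathsf{K}$ be such that the lowest fibre $\mathbf{A}_0$ of the Płonka sum representation of its $\{\wedge,\vee,\neg,0,1\}$-reduct is a two-element Boolean algebra. If the fibres $\mathbf{A}_i$ and $\mathbf{A}_j$ are non-trivial, then the fibre $\mathbf{A}_{i\vee j}$ is non-trivial.
   Context: $\mathsf{K}$ is the variety of type $\langle\wedge,\vee,\neg,J_2,0,1\rangle$ axiomatised by: - $x\vee x\approx x$; - $x\vee y\approx y\vee x$; - $x\vee(y\vee z)\approx(x\vee y)\vee z$; - $\neg\neg x\approx x$; - $x\wedge y\approx\neg(\neg x\vee\neg y)$; - $x\wedge(\neg x\vee y)\approx x\wedge y$; - $0\vee x\approx x$; - $1\approx\neg0$; - $J_2x\vee\neg J_2x\approx1$; - $x\vee J_2y\approx x\vee J_2(x\vee y)$; - $x\wedge J_2x\approx x$; - $J_2(x\wedge\neg x)\approx0$. The $\{\wedge,\vee,\neg,0,1\}$-reduct of any member of $\mathsf{K}$ is an involutive bisemilattice. Hence it is canonically a Płonka sum of Boolean algebras $\mathbf{A}_i$ (fibres) over a join-semilattice $\langle I,\vee,0\rangle$ with least element $0$, with homomorphisms $p_{ij}$ for $i\le j$. Operations are computed in the fibre indexed by the join of the arguments' indices, after mapping them there via the $p_{ij}$. Two elements $a,b$ lie in the same fibre iff $a\wedge(a\vee b)=a$ and $b\wedge(b\vee a)=b$. A fibre is trivial if it has one element. *)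

theory Defs
  imports Main
begin

definition K_algebra ::
  "('a \<Rightarrow> 'a \<Rightarrow> 'a) \<Rightarrow> ('a \<Rightarrow> 'a \<Rightarrow> 'a) \<Rightarrow> ('a \<Rightarrow> 'a) \<Rightarrow> ('a \<Rightarrow> 'a) \<Rightarrow> 'a \<Rightarrow> 'a \<Rightarrow> bool" where
  "K_algebra meet join neg J2 zero one \<longleftrightarrow>
     (\<forall>x. join x x = x) \<and>
     (\<forall>x y. join x y = join y x) \<and>
     (\<forall>x y z. join x (join y z) = join (join x y) z) \<and>
     (\<forall>x. neg (neg x) = x) \<and>
     (\<forall>x y. meet x y = neg (join (neg x) (neg y))) \<and>
     (\<forall>x y. meet x (join (neg x) y) = meet x y) \<and>
     (\<forall>x. join zero x = x) \<and>
     one = neg zero \<and>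
     (\<forall>x. join (J2 x) (neg (J2 x)) = one) \<and>
     (\<forall>x y. join x (J2 y) = join x (J2 (join x y))) \<and>
     (\<forall>x. meet x (J2 x) = x) \<and>
     (\<forall>x. J2 (meet x (neg x)) = zero)"

text \<open>Two elements lie in the same fibre of the Plonka sum decomposition of the
  involutive-bisemilattice reduct.\<close>

definition same_fibre :: "('a \<Rightarrow> 'a \<Rightarrow> 'a) \<Rightarrow> ('a \<Rightarrow> 'a \<Rightarrow> 'a) \<Rightarrow> 'a \<Rightarrow> 'a \<Rightarrow> bool" where
  "same_fibre meet join a b \<longleftrightarrow> meet a (join a b) = a \<and> meet b (join b a) = b"

definition fibre :: "('a \<Rightarrow> 'a \<Rightarrow> 'a) \<Rightarrow> ('a \<Rightarrow> 'a \<Rightarrow> 'a) \<Rightarrow> 'a \<Rightarrow> 'a set" where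
  "fibre meet join a = {b. same_fibre meet join a b}"

definition nontrivial :: "'a set \<Rightarrow> bool" where
  "nontrivial F \<longleftrightarrow> (\<exists>x\<in>F. \<exists>y\<in>F. x \<noteq> y)"

end

theory Submission
  imports Defs
begin

text \<open>The fibre of x has bottom x \<and> \<not>x and top x \<or> \<not>x, and it is trivial exactly when
  these coincide. Since J2 takes values in the fibre of 0, here {0, 1}, and x \<or> \<not>x \<le> J2 (x \<or> \<not>x),
  J2 sends the top of every non-trivial fibre to 1. If the fibre of a \<or> b were trivial, J2 would
  send its top to 0; but (a \<and> \<not>a) \<or> J2 (b \<or> \<not>b) = (a \<and> \<not>a) \<or> J2 ((a \<and> \<not>a) \<or> b \<or> \<not>b), and
  (a \<and> \<not>a) \<or> b \<or> \<not>b is the top of the fibre of a \<or> b, so (a \<and> \<not>a) \<or> 1 = a \<and> \<not>a, i.e. the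
  top and bottom of the fibre of a coincide.\<close>

locale involutive_bisemilattice =
  fixes meet join :: "'a \<Rightarrow> 'a \<Rightarrow> 'a" and neg :: "'a \<Rightarrow> 'a" and zero one :: 'a
  assumes join_idem: "join x x = x"
    and join_commute: "join x y = join y x"
    and join_assoc: "join x (join y z) = join (join x y) z"
    and neg_neg: "neg (neg x) = x"
    and meet_eq: "meet x y = neg (join (neg x) (neg y))"
    and meet_join_neg: "meet x (join (neg x) y) = meet x y"
    and zero_join: "join zero x = x"
    and one_eq: "one = neg zero"
begin

abbreviation bot_of :: "'a \<Rightarrow> 'a" where "bot_of x \<equiv> meet x (neg x)"
abbreviation top_of :: "'a \<Rightarrow> 'a" where "top_of x \<equiv> join x (neg x)"

lemma join_meet_neg: "join x (meet (neg x) y) = join x y"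
  by (metis meet_join_neg meet_eq neg_neg)

lemma bot_of_in_fibre: "bot_of a \<in> fibre meet join a"
proof -
  have "meet a (join a (bot_of a)) = a"
    by (metis meet_join_neg join_commute join_idem meet_eq neg_neg)
  moreover have "meet (bot_of a) (join (bot_of a) a) = bot_of a"
    by (metis meet_join_neg join_commute meet_eq neg_neg)
  ultimately show ?thesis
    unfolding fibre_def same_fibre_def by simp
qed

lemma top_of_in_fibre: "top_of a \<in> fibre meet join a"
proof -
  have "meet a (join a (top_of a)) = a"
    by (metis meet_join_neg join_commute join_idem meet_eq neg_neg)
  moreover have "meet (top_of a) (join (top_of a) a) = top_of a"
    by (simp add: join_assoc join_commute join_idem meet_eq neg_neg)
  ultimately show ?thesis
    unfolding fibre_def same_fibre_def by simp
qed

lemma fibre_eq_bot_of_if_bot_eq_top: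
  assumes "bot_of a = top_of a" and "c \<in> fibre meet join a"
  shows "c = bot_of a"
proof -
  have "meet c (join c a) = c" and "meet a (join a c) = a"
    using assms(2) unfolding fibre_def same_fibre_def by auto
  with assms(1) show ?thesis
    by (metis meet_join_neg join_commute meet_eq neg_neg)
qed

lemma nontrivial_fibre_iff: "nontrivial (fibre meet join a) \<longleftrightarrow> bot_of a \<noteq> top_of a"
  unfolding nontrivial_def
  using bot_of_in_fibre top_of_in_fibre fibre_eq_bot_of_if_bot_eq_top by metis

lemma meet_zero: "meet x zero = bot_of x"
  by (metis meet_join_neg join_commute zero_join)

lemma bot_of_zero: "bot_of zero = zero"
  using meet_zero[of zero] by (simp add: meet_eq join_idem neg_neg)

lemma top_of_zero: "top_of zero = one"
  by (simp add: zero_join one_eq)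

lemma bot_of_top_of: "bot_of (top_of x) = bot_of x"
  by (metis meet_join_neg join_commute meet_eq neg_neg)

lemma join_bot_of_one: "join (bot_of x) one = top_of x"
  by (metis join_commute neg_neg meet_join_neg meet_eq zero_join one_eq)

lemma join_bot_of_top_of: "join (bot_of a) (top_of b) = top_of (join a b)"
  by (metis join_meet_neg join_assoc join_commute meet_eq one_eq zero_join)

lemma fibre_zero_eq_if_card_2:
  assumes "card (fibre meet join zero) = 2"
  shows "fibre meet join zero = {zero, one}"
proof -
  have "nontrivial (fibre meet join zero)"
    using assms unfolding nontrivial_def card_2_iff by blast
  then have "zero \<noteq> one"
    using nontrivial_fibre_iff bot_of_zero top_of_zero by simp
  moreover have "{zero, one} \<subseteq> fibre meet join zero"
    using bot_of_in_fibre[of zero] top_of_in_fibre[of zero] bot_of_zero top_of_zero by simp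
  moreover have "finite (fibre meet join zero)"
    using assms card.infinite by fastforce
  ultimately show ?thesis
    using assms by (metis card_2_iff card_subset_eq)
qed

end

locale K_alg = involutive_bisemilattice +
  fixes J2 :: "'a \<Rightarrow> 'a"
  assumes join_J2_neg: "join (J2 x) (neg (J2 x)) = one"
    and join_J2: "join x (J2 y) = join x (J2 (join x y))"
    and meet_J2: "meet x (J2 x) = x"
    and J2_bot_of: "J2 (meet x (neg x)) = zero"
begin

lemma J2_in_fibre_zero: "J2 x \<in> fibre meet join zero"
proof -
  have "meet zero (J2 x) = zero"
    by (metis join_meet_neg join_J2_neg join_commute meet_eq neg_neg one_eq)
  moreover have "meet (J2 x) (J2 x) = J2 x"
    by (metis meet_eq join_idem neg_neg)
  ultimately show ?thesis
    unfolding fibre_def same_fibre_def by (simp add: zero_join join_commute)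
qed

lemma J2_top_of_if_nontrivial:
  assumes "fibre meet join zero = {zero, one}" and "nontrivial (fibre meet join a)"
  shows "J2 (top_of a) = one"
proof -
  have "J2 (top_of a) \<noteq> zero"
  proof
    assume "J2 (top_of a) = zero"
    then have "top_of a = bot_of a"
      using meet_J2[of "top_of a"] meet_zero bot_of_top_of by simp
    with assms(2) show False
      using nontrivial_fibre_iff by simp
  qed
  then show ?thesis
    using J2_in_fibre_zero assms(1) by blast
qed

lemma nontrivial_fibre_join:
  assumes "fibre meet join zero = {zero, one}"
    and "nontrivial (fibre meet join a)" and "nontrivial (fibre meet join b)"
  shows "nontrivial (fibre meet join (join a b))"
proof (rule ccontr)
  assume "\<not> nontrivial (fibre meet join (join a b))"
  then have "J2 (top_of (join a b)) = zero"
    using nontrivial_fibre_iff J2_bot_of by metis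
  then have "join (bot_of a) (J2 (top_of b)) = bot_of a"
    using join_J2[of "bot_of a" "top_of b"] join_bot_of_top_of by (simp add: join_commute zero_join)
  then have "top_of a = bot_of a"
    using J2_top_of_if_nontrivial[OF assms(1,3)] join_bot_of_one by simp
  with assms(2) show False
    using nontrivial_fibre_iff by simp
qed

end

theorem lemma4p4:
  fixes meet join :: "'a \<Rightarrow> 'a \<Rightarrow> 'a" and neg J2 :: "'a \<Rightarrow> 'a" and zero one :: 'a
    and a b :: 'a
  assumes "K_algebra meet join neg J2 zero one"
    and "card (fibre meet join zero) = 2"
    and "nontrivial (fibre meet join a)"
    and "nontrivial (fibre meet join b)"
  shows "nontrivial (fibre meet join (join a b))"
proof -
  interpret K_alg meet join neg zero one J2
    using assms(1) unfolding K_algebra_def by unfold_locales blast+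
  show ?thesis
    using nontrivial_fibre_join fibre_zero_eq_if_card_2 assms(2-4) by blast
qed

end
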